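(* Let $M\ge 1$ be an integer and let $\tau>0$, $P_0>0$, $\bar{P}>0$, $R_0>0$, $R_i>0$. Let $|h_0|^2,|h_1|^2,\dots,|h_M|^2$ be independent random variables, each exponentially distributed with mean $1$, and let $|h_{(1)}|^2\le\cdots\le|h_{(M)}|^2$ be the order statistics of $|h_1|^2,\dots,|h_M|^2$. Let $N$ be the (random) number of indices $m\in\{1,\dots,M\}$ with $|h_m|^2>\tau$ (so the admitted users have gains $|h_{(M-N+1)}|^2,\dots,|h_{(M)}|^2$). For $n\ge 1$ let $R_{sum,n}=nR_i$ and $\epsilon_{s,n}=2^{R_{sum,n}}-1$, and let $\epsilon_0=2^{R_0}-1$. Define $$\mathbb{P}_0^{\mathrm{II,OL}}=1-\sum_{n=1}^{M}\mathbb{P}(N=n)\,Q_3(n)-\mathbb{P}(N=0)\,\mathbb{P}\left(\log_2(1+|h_0|^2P_0)>R_0\right),$$ where $$Q_3(n)=\mathbb{P}\left(\log_2(1+|h_0|^2P_0)>R_0,\ \log_2\left(1+\frac{\bar{P}\sum_{j=M-n+1}^{M}|h_{(j)}|^2}{1+|h_0|^2P_0}\right)>R_{sum,n}\ \middle|\ N=n\right).$$ Then, with $\tau_n=\frac{n\tau\epsilon_{s,n}^{-1}\bar{P}-1}{P_0}$ and $\bar{\tau}_n=\max\left(\tau_n,\epsilon_0P_0^{-1}\right)$, \begin{align*} \mathbb{P}_0^{\mathrm{II,OL}} =& 1-\sum_{n=1}^{M}\frac{M!}{n!(M-n)!}e^{-n\tau}\left(1-e^{-\tau}\right)^{M-n}\Bigg(\sum_{l=1}^{n-1}\frac{\epsilon_{s,n}^l\bar{P}^{-l}P_0^l}{l!}e^{-\tau_n}\frac{\Gamma\left(l+1,(\bar{\tau}_n-\tau_n)(1+\epsilon_{s,n}\bar{P}^{-1}P_0)\right)}{(1+\epsilon_{s,n}\bar{P}^{-1}P_0)^{l+1}}\\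 &+e^{-\epsilon_0P_0^{-1}}-e^{-\bar{\tau}_n}+\frac{e^{-\tau_n-(\bar{\tau}_n-\tau_n)(1+\epsilon_{s,n}\bar{P}^{-1}P_0)}}{1+\epsilon_{s,n}\bar{P}^{-1}P_0}\Bigg)-\left(1-e^{-\tau}\right)^Me^{-\epsilon_0P_0^{-1}}, \end{align*} where $\Gamma(a,x)=\int_x^\infty t^{a-1}e^{-t}\,dt$ is the upper incomplete Gamma function.
   Context: Uplink semi-grant-free NOMA model: a grant-based user $\mathrm{U}_0$ with channel $h_0$ and transmit SNR $P_0$, and $M$ grant-free users with channels $h_m$ and common transmit SNR $\bar{P}$; all channels are i.i.d. Rayleigh fading (gains i.i.d. exponential with mean 1), noise power normalized to 1. In the "Type II open-loop" protocol the base station broadcasts a threshold $\tau$ and exactly the grant-free users whose channel gain exceeds $\tau$ transmit, each with target rate $R_i$; the base station decodes the grant-free users first (successful decoding modeled by the sum-rate criterion with target sum rate $nR_i$, treating $\mathrm{U}_0$'s signal as interference) and $\mathrm{U}_0$'s message last, so $\mathrm{U}_0$ is successful when both events in $Q_3$ hold (or, when $N=0$, when its interference-free rate exceeds $R_0$); $\mathbb{P}_0^{\mathrm{II,OL}}$ is $\mathrm{U}_0$'s outage probability. *)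

theory Defs
  imports "HOL-Probability.Probability"
begin

definition upper_Gamma :: "real \<Rightarrow> real \<Rightarrow> real" where
  "upper_Gamma a x = (LINT t:{x<..}|lborel. t powr (a - 1) * exp (- t))"

definition ostat :: "(nat \<Rightarrow> 'a \<Rightarrow> real) \<Rightarrow> nat \<Rightarrow> nat \<Rightarrow> 'a \<Rightarrow> real" where
  "ostat h M j \<omega> = sort (map (\<lambda>m. h m \<omega>) [1..<M+1]) ! (j - 1)"

definition Nadm :: "(nat \<Rightarrow> 'a \<Rightarrow> real) \<Rightarrow> nat \<Rightarrow> real \<Rightarrow> 'a \<Rightarrow> nat" where
  "Nadm h M \<tau> \<omega> = card {m \<in> {1..M}. h m \<omega> > \<tau>}"

definition Q3 :: "'a measure \<Rightarrow> (nat \<Rightarrow> 'a \<Rightarrow> real) \<Rightarrow> nat \<Rightarrow> real \<Rightarrow> real \<Rightarrow> real \<Rightarrow> real \<Rightarrow> real \<Rightarrow> nat \<Rightarrow> real" where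
  "Q3 Mp h M \<tau> P0 Pbar R0 Ri n =
     measure Mp {\<omega> \<in> space Mp. log 2 (1 + h 0 \<omega> * P0) > R0 \<and>
        log 2 (1 + Pbar * (\<Sum>j = M - n + 1..M. ostat h M j \<omega>) / (1 + h 0 \<omega> * P0)) > real n * Ri \<and>
        Nadm h M \<tau> \<omega> = n}
     / measure Mp {\<omega> \<in> space Mp. Nadm h M \<tau> \<omega> = n}"

definition P0_IIOL :: "'a measure \<Rightarrow> (nat \<Rightarrow> 'a \<Rightarrow> real) \<Rightarrow> nat \<Rightarrow> real \<Rightarrow> real \<Rightarrow> real \<Rightarrow> real \<Rightarrow> real \<Rightarrow> real" where
  "P0_IIOL Mp h M \<tau> P0 Pbar R0 Ri =
     1 - (\<Sum>n = 1..M. measure Mp {\<omega> \<in> space Mp. Nadm h M \<tau> \<omega> = n} * Q3 Mp h M \<tau> P0 Pbar R0 Ri n)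
       - measure Mp {\<omega> \<in> space Mp. Nadm h M \<tau> \<omega> = 0}
         * measure Mp {\<omega> \<in> space Mp. log 2 (1 + h 0 \<omega> * P0) > R0}"

end

theory Submission
  imports Defs
begin

text \<open>
  Condition on the set T of admitted grant-free users, with n = card T. The other M - n users
  stay below \<tau> with probability (1 - e^-\<tau>)^(M-n), independently of everything else. By
  memorylessness each admitted gain is \<tau> plus a fresh Exp(1) variable, so the admitted gains all
  exceed \<tau> and sum to more than s with probability e^(-n\<tau>) times the Erlang tail
  e^-z \<Sum>l<n. z^l / l! at z = s - n\<tau>. The two decoding conditions say that h 0 > \<epsilon>0 / P0 and
  that the admitted sum exceeds a bound affine in h 0; integrating the Erlang tail against the
  density of h 0 produces the upper incomplete Gamma terms. Finally, the sum of the n largest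
  order statistics is the sum of the admitted gains, and there are M choose n choices of T.
\<close>

lemma (in prob_space) emeasure_indep_component:
  fixes X :: "'i \<Rightarrow> 'a \<Rightarrow> real"
  assumes ind: "indep_vars (\<lambda>_. borel) X I" and k: "k \<in> I" "J \<subseteq> I" "k \<notin> J"
    and dist: "distributed M lborel (X k) f"
    and P: "Measurable.pred (borel \<Otimes>\<^sub>M PiM J (\<lambda>_. borel)) (\<lambda>(x, y). P x y)"
  shows "emeasure M {\<omega> \<in> space M. P (X k \<omega>) (\<lambda>i\<in>J. X i \<omega>)}
    = (\<integral>\<^sup>+x. f x * emeasure M {\<omega> \<in> space M. P x (\<lambda>i\<in>J. X i \<omega>)} \<partial>lborel)"
proof -
  let ?U = "\<lambda>\<omega>. \<lambda>i\<in>{k}. X i \<omega>" and ?V = "\<lambda>\<omega>. \<lambda>i\<in>J. X i \<omega>"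
  let ?N1 = "PiM {k} (\<lambda>_. borel) :: ('i \<Rightarrow> real) measure"
  let ?N = "PiM J (\<lambda>_. borel) :: ('i \<Rightarrow> real) measure"
  have iv: "indep_var ?N1 ?U ?N ?V"
    using k by (intro indep_var_restrict[OF ind]) auto
  have rvU: "random_variable ?N1 ?U" using indep_var_rv1[OF iv] .
  have rvV: "random_variable ?N ?V" using indep_var_rv2[OF iv] .
  interpret V: prob_space "distr M ?N ?V" by (rule prob_space_distr[OF rvV])
  define B where "B = {p \<in> space (?N1 \<Otimes>\<^sub>M ?N). P (fst p k) (snd p)}"
  have B: "B \<in> sets (?N1 \<Otimes>\<^sub>M ?N)"
    unfolding B_def by measurable (use P in \<open>simp add: case_prod_beta\<close>)
  define C where "C = {p \<in> space (borel \<Otimes>\<^sub>M ?N). P (fst p) (snd p)}"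
  have C_sets: "C \<in> sets (borel \<Otimes>\<^sub>M ?N)"
    using P by (simp add: C_def pred_def case_prod_beta)
  then have C: "C \<in> sets (borel \<Otimes>\<^sub>M distr M ?N ?V)"
    by (simp add: sets_pair_measure_cong[OF refl sets_distr])
  define E where "E x = emeasure (distr M ?N ?V) (Pair x -` C)" for x
  have E_borel: "E \<in> borel_measurable borel"
    unfolding E_def using C by (rule V.measurable_emeasure_Pair)
  have E_eq: "E x = emeasure M {\<omega> \<in> space M. P x (?V \<omega>)}" for x
    using sets_Pair1[OF C_sets] rvV measurable_space[OF rvV] unfolding E_def
    by (subst emeasure_distr) (auto intro!: arg_cong[where f="emeasure M"] simp: C_def space_pair_measure)
  have "emeasure M {\<omega> \<in> space M. P (X k \<omega>) (?V \<omega>)} = emeasure M ((\<lambda>\<omega>. (?U \<omega>, ?V \<omega>)) -` B \<inter> space M)"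
    using measurable_space[OF rvU] measurable_space[OF rvV]
    by (intro arg_cong[where f="emeasure M"]) (auto simp: B_def space_pair_measure)
  also have "\<dots> = emeasure (distr M (?N1 \<Otimes>\<^sub>M ?N) (\<lambda>\<omega>. (?U \<omega>, ?V \<omega>))) B"
    using B rvU rvV by (subst emeasure_distr) (auto intro!: measurable_Pair)
  also have "\<dots> = emeasure (distr M ?N1 ?U \<Otimes>\<^sub>M distr M ?N ?V) B"
    using iv by (simp add: indep_var_distribution_eq)
  also have "\<dots> = (\<integral>\<^sup>+y. emeasure (distr M ?N ?V) (Pair y -` B) \<partial>distr M ?N1 ?U)"
    using B by (subst V.emeasure_pair_measure_alt) auto
  also have "\<dots> = (\<integral>\<^sup>+y. E (y k) \<partial>distr M ?N1 ?U)"
    by (intro nn_integral_cong arg_cong[where f="emeasure _"]) (auto simp: E_def B_def C_def space_pair_measure)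
  also have "\<dots> = (\<integral>\<^sup>+\<omega>. E (X k \<omega>) \<partial>M)"
    using rvU E_borel by (subst nn_integral_distr) auto
  also have "\<dots> = (\<integral>\<^sup>+x. E x \<partial>distr M lborel (X k))"
    using E_borel dist by (subst nn_integral_distr) (auto dest: distributed_measurable)
  also have "\<dots> = (\<integral>\<^sup>+x. f x * E x \<partial>lborel)"
    using E_borel dist by (simp add: distributed_distr_eq_density nn_integral_density distributed_borel_measurable)
  finally show ?thesis by (simp add: E_eq)
qed

lemma (in prob_space) prob_indep_restrict_conj:
  assumes ind: "indep_vars M' X I" and AB: "A \<inter> B = {}" "A \<subseteq> I" "B \<subseteq> I"
    and P: "{y \<in> space (PiM A M'). P y} \<in> sets (PiM A M')"
    and Q: "{y \<in> space (PiM B M'). Q y} \<in> sets (PiM B M')"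
  shows "prob {\<omega> \<in> space M. P (\<lambda>i\<in>A. X i \<omega>) \<and> Q (\<lambda>i\<in>B. X i \<omega>)}
    = prob {\<omega> \<in> space M. P (\<lambda>i\<in>A. X i \<omega>)} * prob {\<omega> \<in> space M. Q (\<lambda>i\<in>B. X i \<omega>)}"
proof -
  let ?VA = "\<lambda>\<omega>. \<lambda>i\<in>A. X i \<omega>" and ?VB = "\<lambda>\<omega>. \<lambda>i\<in>B. X i \<omega>"
  have iv: "indep_var (PiM A M') ?VA (PiM B M') ?VB"
    using AB by (rule indep_var_restrict[OF ind])
  note VA = measurable_space[OF indep_var_rv1[OF iv]] and VB = measurable_space[OF indep_var_rv2[OF iv]]
  show ?thesis
    using indep_varD[OF iv P Q] VA VB
    by (simp add: vimage_def Int_def conj_commute conj_left_commute cong: conj_cong)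
qed

lemma (in finite_measure) measure_eq_sum_fibres:
  assumes "finite A" and "\<And>a. a \<in> A \<Longrightarrow> {\<omega> \<in> space M. g \<omega> = a \<and> Q a \<omega>} \<in> sets M"
  shows "measure M {\<omega> \<in> space M. g \<omega> \<in> A \<and> Q (g \<omega>) \<omega>} = (\<Sum>a\<in>A. measure M {\<omega> \<in> space M. g \<omega> = a \<and> Q a \<omega>})"
proof -
  have "{\<omega> \<in> space M. g \<omega> \<in> A \<and> Q (g \<omega>) \<omega>} = (\<Union>a\<in>A. {\<omega> \<in> space M. g \<omega> = a \<and> Q a \<omega>})"
    by auto
  also have "measure M \<dots> = (\<Sum>a\<in>A. measure M {\<omega> \<in> space M. g \<omega> = a \<and> Q a \<omega>})"
    using assms by (intro finite_measure_finite_Union) (auto simp: disjoint_family_on_def)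
  finally show ?thesis .
qed

text \<open>No hypothesis \<open>measure M B \<noteq> 0\<close> is needed: a null \<open>B\<close> has null subsets, and \<open>x / 0 = 0\<close>.\<close>
lemma (in finite_measure) measure_mult_divide_measure_subset:
  assumes "A \<subseteq> B" and "B \<in> sets M"
  shows "measure M B * (measure M A / measure M B) = measure M A"
  using finite_measure_mono[OF assms] measure_nonneg[of M A] by (cases "measure M B = 0") auto

lemma sum_ennreal_mult:
  assumes "\<And>i. i \<in> I \<Longrightarrow> 0 \<le> f i" and "\<And>i. i \<in> I \<Longrightarrow> 0 \<le> g i"
  shows "(\<Sum>i\<in>I. ennreal (f i) * ennreal (g i)) = ennreal (\<Sum>i\<in>I. f i * g i)"
proof -
  have "(\<Sum>i\<in>I. ennreal (f i) * ennreal (g i)) = (\<Sum>i\<in>I. ennreal (f i * g i))"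
    using assms by (intro sum.cong refl) (simp add: ennreal_mult)
  also have "\<dots> = ennreal (\<Sum>i\<in>I. f i * g i)"
    using assms by (intro sum_ennreal) simp
  finally show ?thesis .
qed

section \<open>Erlang tails\<close>

definition exp_partial_sum :: "nat \<Rightarrow> real \<Rightarrow> real" where
  "exp_partial_sum n z = (\<Sum>l<n. z ^ l / fact l)"

lemma exp_partial_sum_nonneg: "z \<ge> 0 \<Longrightarrow> exp_partial_sum n z \<ge> 0"
  unfolding exp_partial_sum_def by (intro sum_nonneg) auto

lemma exp_partial_sum_Suc_0 [simp]: "exp_partial_sum (Suc n) 0 = 1"
  by (induction n) (auto simp: exp_partial_sum_def)

lemma borel_measurable_exp_partial_sum [measurable]: "exp_partial_sum n \<in> borel_measurable borel"
  unfolding exp_partial_sum_def by measurable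

lemma exp_partial_sum_Suc_ge_1: "z \<ge> 0 \<Longrightarrow> exp_partial_sum (Suc n) z \<ge> 1"
  unfolding exp_partial_sum_def lessThan_Suc_eq_insert_0
  by (simp add: sum.reindex sum_nonneg)

lemma has_real_derivative_exp_partial_sum:
  "(exp_partial_sum (Suc n) has_real_derivative exp_partial_sum n z) (at z)"
proof -
  have "((\<lambda>z. \<Sum>l<Suc n. z ^ l / fact l) has_real_derivative (\<Sum>l<Suc n. real l * z ^ (l - 1) / fact l)) (at z)"
    by (auto intro!: derivative_eq_intros)
  moreover have "(\<Sum>l<Suc n. real l * z ^ (l - 1) / fact l) = exp_partial_sum n z"
    unfolding exp_partial_sum_def lessThan_Suc_eq_insert_0
    by (simp add: sum.reindex del: fact_Suc) (simp add: divide_simps)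
  ultimately show ?thesis
    unfolding exp_partial_sum_def by metis
qed

lemma has_real_derivative_exp_partial_sum_comp [derivative_intros]:
  "(g has_real_derivative g') (at x within S) \<Longrightarrow>
    ((\<lambda>x. exp_partial_sum (Suc n) (g x)) has_real_derivative exp_partial_sum n (g x) * g') (at x within S)"
  by (rule DERIV_chain2[OF has_real_derivative_exp_partial_sum])

text \<open>The tail \<open>P(E\<^sub>1 + \<dots> + E\<^sub>n > z)\<close> of a sum of \<open>n\<close> i.i.d. \<open>Exp(1)\<close> variables.\<close>
definition erlang_tail :: "nat \<Rightarrow> real \<Rightarrow> real" where
  "erlang_tail n z = (if z < 0 then 1 else exp (- z) * exp_partial_sum n z)"

lemma erlang_tail_nonneg: "erlang_tail n z \<ge> 0"
  by (simp add: erlang_tail_def exp_partial_sum_nonneg)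

lemma borel_measurable_erlang_tail [measurable]: "erlang_tail n \<in> borel_measurable borel"
  unfolding erlang_tail_def by measurable

lemma nn_integral_exp_atLeast:
  "(\<integral>\<^sup>+y. ennreal (exp (- y)) * indicator {d..} y \<partial>lborel) = ennreal (exp (- d))"
proof -
  have "((\<lambda>y::real. - exp (- y)) \<longlongrightarrow> 0) at_top"
    using tendsto_minus[OF exp_at_bot[THEN filterlim_compose, OF filterlim_uminus_at_bot_at_top]]
    by simp
  then show ?thesis
    by (subst nn_integral_FTC_atLeast[where F="\<lambda>y. - exp (- y)" and T=0])
       (auto intro!: derivative_eq_intros)
qed

lemma nn_integral_exponential_density_erlang_tail:
  "(\<integral>\<^sup>+u. ennreal (exponential_density 1 u) * ennreal (erlang_tail n (z - u)) \<partial>lborel)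
    = ennreal (erlang_tail (Suc n) z)"
proof (cases "z < 0")
  case True
  have "(\<integral>\<^sup>+u. ennreal (exponential_density 1 u) * ennreal (erlang_tail n (z - u)) \<partial>lborel)
      = (\<integral>\<^sup>+u. ennreal (exp (- u)) * indicator {0..} u \<partial>lborel)"
    using True by (intro nn_integral_cong) (simp add: exponential_density_def erlang_tail_def indicator_def)
  with True show ?thesis
    by (simp add: nn_integral_exp_atLeast erlang_tail_def)
next
  case False
  have "(\<integral>\<^sup>+u. ennreal (exponential_density 1 u) * ennreal (erlang_tail n (z - u)) \<partial>lborel)
      = (\<integral>\<^sup>+u. ennreal (exp (- z)) * (ennreal (exp_partial_sum n (z - u)) * indicator {0..z} u)
           + ennreal (exp (- u)) * indicator {z..} u \<partial>lborel)"
  proof (rule nn_integral_cong_AE)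
    show "AE u in lborel. ennreal (exponential_density 1 u) * ennreal (erlang_tail n (z - u))
        = ennreal (exp (- z)) * (ennreal (exp_partial_sum n (z - u)) * indicator {0..z} u)
           + ennreal (exp (- u)) * indicator {z..} u"
      using AE_lborel_singleton[of z]
    proof eventually_elim
      case (elim u)
      have "exp (- u) * exp (u - z) = exp (- z)"
        by (simp flip: exp_add)
      with elim False show ?case
        by (auto simp: exponential_density_def erlang_tail_def indicator_def exp_partial_sum_nonneg
            ennreal_mult[symmetric] mult.assoc[symmetric])
    qed
  qed
  also have "\<dots> = ennreal (exp (- z)) * (\<integral>\<^sup>+u. ennreal (exp_partial_sum n (z - u)) * indicator {0..z} u \<partial>lborel)
      + ennreal (exp (- z))"
    by (subst nn_integral_add) (auto simp: nn_integral_cmult nn_integral_exp_atLeast)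
  also have "(\<integral>\<^sup>+u. ennreal (exp_partial_sum n (z - u)) * indicator {0..z} u \<partial>lborel)
      = ennreal (exp_partial_sum (Suc n) z - 1)"
    using False
    by (subst nn_integral_FTC_Icc[where F="\<lambda>u. - exp_partial_sum (Suc n) (z - u)"])
       (auto intro!: derivative_eq_intros exp_partial_sum_nonneg)
  also have "ennreal (exp (- z)) * ennreal (exp_partial_sum (Suc n) z - 1) + ennreal (exp (- z))
      = ennreal (erlang_tail (Suc n) z)"
    using False exp_partial_sum_Suc_ge_1[of z n]
    by (simp add: erlang_tail_def algebra_simps flip: ennreal_mult ennreal_plus)
  finally show ?thesis .
qed

text \<open>The probability that \<open>n\<close> i.i.d. \<open>Exp(1)\<close> variables all exceed \<open>\<tau>\<close> and sum to more than \<open>s\<close>: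
  by memorylessness, given that they exceed \<open>\<tau>\<close> they are \<open>\<tau>\<close> plus i.i.d. \<open>Exp(1)\<close> variables.\<close>
definition exceed_tail :: "real \<Rightarrow> nat \<Rightarrow> real \<Rightarrow> real" where
  "exceed_tail \<tau> n s = exp (- (real n * \<tau>)) * erlang_tail n (s - real n * \<tau>)"

lemma exceed_tail_nonneg: "exceed_tail \<tau> n s \<ge> 0"
  by (simp add: exceed_tail_def erlang_tail_nonneg)

lemma nn_integral_exponential_density_exceed_tail:
  assumes "\<tau> \<ge> 0"
  shows "(\<integral>\<^sup>+y. ennreal (exponential_density 1 y) * ennreal (if \<tau> < y then exceed_tail \<tau> n (s - y) else 0) \<partial>lborel)
    = ennreal (exceed_tail \<tau> (Suc n) s)"
proof -
  define z where "z = s - real (Suc n) * \<tau>"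
  define g where "g u = ennreal (exponential_density 1 u) * ennreal (erlang_tail n (z - u))" for u
  have "(\<integral>\<^sup>+y. ennreal (exponential_density 1 y) * ennreal (if \<tau> < y then exceed_tail \<tau> n (s - y) else 0) \<partial>lborel)
      = (\<integral>\<^sup>+y. ennreal (exp (- (real (Suc n) * \<tau>))) * g (y - \<tau>) \<partial>lborel)"
  proof (rule nn_integral_cong_AE)
    show "AE y in lborel. ennreal (exponential_density 1 y) * ennreal (if \<tau> < y then exceed_tail \<tau> n (s - y) else 0)
        = ennreal (exp (- (real (Suc n) * \<tau>))) * g (y - \<tau>)"
      using AE_lborel_singleton[of \<tau>]
    proof eventually_elim
      case (elim y)
      have "exp (- y) * exp (- (real n * \<tau>)) = exp (- (real (Suc n) * \<tau>)) * exp (- (y - \<tau>))"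
        by (simp add: algebra_simps flip: exp_add)
      with elim assms show ?case
        by (auto simp: g_def z_def exceed_tail_def exponential_density_def erlang_tail_nonneg algebra_simps
            simp flip: ennreal_mult)
    qed
  qed
  also have "\<dots> = ennreal (exp (- (real (Suc n) * \<tau>))) * (\<integral>\<^sup>+u. g u \<partial>lborel)"
    using nn_integral_real_affine[of "\<lambda>y. g (y - \<tau>)" 1 \<tau>]
    by (simp add: nn_integral_cmult g_def)
  also have "\<dots> = ennreal (exceed_tail \<tau> (Suc n) s)"
    by (simp add: g_def nn_integral_exponential_density_erlang_tail exceed_tail_def z_def
        ennreal_mult erlang_tail_nonneg)
  finally show ?thesis .
qed

section \<open>Incomplete Gamma integrals\<close>

lemma nn_integral_upper_Gamma:
  assumes "w \<ge> 0"
  shows "(\<integral>\<^sup>+t. ennreal (t ^ l * exp (- t)) * indicator {w..} t \<partial>lborel) = ennreal (upper_Gamma (real l + 1) w)"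
proof -
  let ?I = "\<integral>\<^sup>+t. ennreal (t ^ l * exp (- t)) * indicator {w..} t \<partial>lborel"
  have "?I \<le> (\<integral>\<^sup>+t. ennreal (t ^ l * exp (- t)) * indicator {0..} t \<partial>lborel)"
    using assms by (intro nn_integral_mono) (auto simp: indicator_def)
  then have finite: "?I < \<infinity>"
    using nn_intergal_power_times_exp_Ici[of l] by (simp add: order_le_less_trans)
  have "(\<integral>\<^sup>+t. ennreal (indicator {w<..} t * (t powr (real l + 1 - 1) * exp (- t))) \<partial>lborel) = ?I"
  proof (rule nn_integral_cong_AE)
    show "AE t in lborel. ennreal (indicator {w<..} t * (t powr (real l + 1 - 1) * exp (- t)))
        = ennreal (t ^ l * exp (- t)) * indicator {w..} t"
      using AE_lborel_singleton[of w] by eventually_elim (use assms in \<open>auto simp: indicator_def powr_realpow\<close>)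
  qed
  then have "upper_Gamma (real l + 1) w = enn2real ?I"
    unfolding upper_Gamma_def set_lebesgue_integral_def
    by (subst integral_eq_nn_integral) (auto simp: indicator_def)
  with finite show ?thesis
    by simp
qed

lemma upper_Gamma_nonneg: "upper_Gamma a w \<ge> 0"
  unfolding upper_Gamma_def set_lebesgue_integral_def by (simp add: indicator_def)

lemma upper_Gamma_1: "w \<ge> 0 \<Longrightarrow> upper_Gamma 1 w = exp (- w)"
  using nn_integral_upper_Gamma[of w 0] nn_integral_exp_atLeast[of w] upper_Gamma_nonneg[of 1 w]
  by simp

lemma nn_integral_exp_mult_power_atLeast:
  assumes c: "c > 0" and d: "d \<ge> 0"
  shows "(\<integral>\<^sup>+u. ennreal (exp (- c * u) * u ^ l) * indicator {d..} u \<partial>lborel)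
    = ennreal (upper_Gamma (real l + 1) (c * d) / c ^ (l + 1))"
proof -
  have "(\<integral>\<^sup>+u. ennreal (exp (- c * u) * u ^ l) * indicator {d..} u \<partial>lborel)
      = ennreal (1 / c) * (\<integral>\<^sup>+t. ennreal (exp (- c * (t / c)) * (t / c) ^ l) * indicator {d..} (t / c) \<partial>lborel)"
    using nn_integral_real_affine[of "\<lambda>u. ennreal (exp (- c * u) * u ^ l) * indicator {d..} u" "1 / c" 0] c
    by simp
  also have "\<dots> = (\<integral>\<^sup>+t. ennreal (1 / c ^ (l + 1)) * (ennreal (t ^ l * exp (- t)) * indicator {c * d..} t) \<partial>lborel)"
  proof (subst nn_integral_cmult[symmetric], simp, intro nn_integral_cong)
    fix t :: real
    have "1 / c * (exp (- c * (t / c)) * (t / c) ^ l) = 1 / c ^ (l + 1) * (t ^ l * exp (- t))"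
      using c by (simp add: field_simps)
    then have "ennreal (1 / c) * ennreal (exp (- c * (t / c)) * (t / c) ^ l)
        = ennreal (1 / c ^ (l + 1)) * ennreal (t ^ l * exp (- t))"
      using c by (simp flip: ennreal_mult')
    moreover have "t / c \<in> {d..} \<longleftrightarrow> t \<in> {c * d..}"
      using c by (simp add: field_simps)
    ultimately show "ennreal (1 / c) * (ennreal (exp (- c * (t / c)) * (t / c) ^ l) * indicator {d..} (t / c))
        = ennreal (1 / c ^ (l + 1)) * (ennreal (t ^ l * exp (- t)) * indicator {c * d..} t)"
      using c by (simp add: indicator_def)
  qed
  also have "\<dots> = ennreal (upper_Gamma (real l + 1) (c * d) / c ^ (l + 1))"
    using c d by (simp add: nn_integral_cmult nn_integral_upper_Gamma flip: ennreal_mult')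
  finally show ?thesis .
qed

lemma nn_integral_exp_shifted_power_atLeast:
  assumes a: "a \<ge> 0" and b: "b \<ge> t"
  shows "(\<integral>\<^sup>+x. ennreal (exp (- x) * exp (- (a * (x - t))) * (x - t) ^ l) * indicator {b..} x \<partial>lborel)
    = ennreal (exp (- t) * upper_Gamma (real l + 1) ((b - t) * (1 + a)) / (1 + a) ^ (l + 1))"
proof -
  have "(\<integral>\<^sup>+x. ennreal (exp (- x) * exp (- (a * (x - t))) * (x - t) ^ l) * indicator {b..} x \<partial>lborel)
      = (\<integral>\<^sup>+u. ennreal (exp (- (t + u)) * exp (- (a * u)) * u ^ l) * indicator {b..} (t + u) \<partial>lborel)"
    using nn_integral_real_affine[of "\<lambda>x. ennreal (exp (- x) * exp (- (a * (x - t))) * (x - t) ^ l) * indicator {b..} x" 1 t]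
    by simp
  also have "\<dots> = (\<integral>\<^sup>+u. ennreal (exp (- t)) * (ennreal (exp (- (1 + a) * u) * u ^ l) * indicator {b - t..} u) \<partial>lborel)"
  proof (intro nn_integral_cong)
    fix u :: real
    have "exp (- (t + u)) * exp (- (a * u)) = exp (- t) * exp (- (1 + a) * u)"
      by (simp add: algebra_simps flip: exp_add)
    then show "ennreal (exp (- (t + u)) * exp (- (a * u)) * u ^ l) * indicator {b..} (t + u)
        = ennreal (exp (- t)) * (ennreal (exp (- (1 + a) * u) * u ^ l) * indicator {b - t..} u)"
      by (auto simp: indicator_def mult.assoc simp flip: ennreal_mult')
  qed
  also have "\<dots> = ennreal (exp (- t)) * ennreal (upper_Gamma (real l + 1) ((1 + a) * (b - t)) / (1 + a) ^ (l + 1))"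
    using a b nn_integral_exp_mult_power_atLeast[of "1 + a" "b - t" l] by (subst nn_integral_cmult) auto
  also have "\<dots> = ennreal (exp (- t) * upper_Gamma (real l + 1) ((b - t) * (1 + a)) / (1 + a) ^ (l + 1))"
    by (simp add: mult.commute[of "1 + a"] flip: ennreal_mult')
  finally show ?thesis .
qed

section \<open>Both decoding conditions, given the admitted users\<close>

text \<open>The bracketed factor of the theorem, with \<open>\<epsilon>0 = 2 powr R0 - 1\<close> and \<open>\<epsilon>s = 2 powr (n * Ri) - 1\<close>: the
  probability that both decoding conditions hold, given that all \<open>n\<close> users of a fixed set exceed \<open>\<tau>\<close>.\<close>
definition success_prob_given_admitted :: "real \<Rightarrow> real \<Rightarrow> real \<Rightarrow> real \<Rightarrow> real \<Rightarrow> nat \<Rightarrow> real" where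
  "success_prob_given_admitted \<tau> P0 Pbar \<epsilon>0 \<epsilon>s n =
    (let \<tau>n = (real n * \<tau> * Pbar / \<epsilon>s - 1) / P0;
         \<tau>bn = max \<tau>n (\<epsilon>0 / P0);
         c = 1 + \<epsilon>s * P0 / Pbar
     in (\<Sum>l = 1..n - 1. \<epsilon>s ^ l * Pbar powr (- real l) * P0 ^ l / fact l * exp (- \<tau>n)
            * upper_Gamma (real l + 1) ((\<tau>bn - \<tau>n) * c) / c ^ (l + 1))
        + exp (- \<epsilon>0 / P0) - exp (- \<tau>bn)
        + exp (- \<tau>n - (\<tau>bn - \<tau>n) * c) / c)"

lemma success_prob_given_admitted_eq_sum:
  assumes n: "n \<ge> 1" and P0: "P0 > 0" and Pbar: "Pbar > 0" and \<epsilon>s: "\<epsilon>s > 0"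
    and a_def: "a = \<epsilon>s * P0 / Pbar" and \<tau>n_def: "\<tau>n = (real n * \<tau> * Pbar / \<epsilon>s - 1) / P0"
    and \<tau>b_def: "\<tau>b = max \<tau>n (\<epsilon>0 / P0)"
  shows "success_prob_given_admitted \<tau> P0 Pbar \<epsilon>0 \<epsilon>s n = exp (- (\<epsilon>0 / P0)) - exp (- \<tau>b)
    + (\<Sum>l<n. a ^ l / fact l * (exp (- \<tau>n) * upper_Gamma (real l + 1) ((\<tau>b - \<tau>n) * (1 + a)) / (1 + a) ^ (l + 1)))"
proof -
  define c where "c = 1 + a"
  define d where "d = \<tau>b - \<tau>n"
  define t where "t l = a ^ l / fact l * (exp (- \<tau>n) * upper_Gamma (real l + 1) (d * c) / c ^ (l + 1))" for l
  obtain m where m: "n = Suc m"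
    using n by (cases n) auto
  have "c > 0" "d \<ge> 0"
    using P0 Pbar \<epsilon>s by (auto simp: c_def d_def a_def \<tau>b_def add_pos_pos)
  then have t0: "t 0 = exp (- \<tau>n - d * c) / c"
    by (simp add: t_def upper_Gamma_1 exp_diff exp_minus field_simps)
  have tk: "t k = \<epsilon>s ^ k * Pbar powr (- real k) * P0 ^ k / fact k * exp (- \<tau>n)
      * upper_Gamma (real k + 1) (d * c) / c ^ (k + 1)" for k
  proof -
    have "a ^ k = \<epsilon>s ^ k * Pbar powr (- real k) * P0 ^ k"
      using Pbar by (simp add: a_def powr_minus powr_realpow power_mult_distrib power_divide divide_inverse power_inverse)
    then show ?thesis
      by (simp add: t_def)
  qed
  have "(\<Sum>l<n. t l) = t 0 + (\<Sum>l = 1..n - 1. t l)"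
    unfolding m sum.lessThan_Suc_shift by (simp add: sum.atLeast1_atMost_eq)
  also have "\<dots> = exp (- \<tau>n - d * c) / c + (\<Sum>l = 1..n - 1. \<epsilon>s ^ l * Pbar powr (- real l)
      * P0 ^ l / fact l * exp (- \<tau>n) * upper_Gamma (real l + 1) (d * c) / c ^ (l + 1))"
    unfolding t0 unfolding tk ..
  moreover have "success_prob_given_admitted \<tau> P0 Pbar \<epsilon>0 \<epsilon>s n = (\<Sum>l = 1..n - 1. \<epsilon>s ^ l * Pbar powr (- real l)
      * P0 ^ l / fact l * exp (- \<tau>n) * upper_Gamma (real l + 1) (d * c) / c ^ (l + 1))
      + exp (- \<epsilon>0 / P0) - exp (- \<tau>b) + exp (- \<tau>n - d * c) / c"
    unfolding success_prob_given_admitted_def Let_def \<tau>n_def[symmetric] a_def[symmetric] c_def[symmetric]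
      \<tau>b_def[symmetric] d_def[symmetric] ..
  ultimately show ?thesis
    by (simp add: t_def c_def d_def)
qed

lemma success_prob_given_admitted_nonneg:
  assumes "n \<ge> 1" and "P0 > 0" and "Pbar > 0" and "\<epsilon>s > 0" and "\<epsilon>0 \<ge> 0"
  shows "success_prob_given_admitted \<tau> P0 Pbar \<epsilon>0 \<epsilon>s n \<ge> 0"
proof -
  have "0 < 1 + \<epsilon>s * P0 / Pbar"
    using assms by (simp add: add_pos_pos)
  then show ?thesis
    using assms
    by (subst success_prob_given_admitted_eq_sum[OF assms(1-4) refl refl refl])
       (auto intro!: add_nonneg_nonneg sum_nonneg mult_nonneg_nonneg divide_nonneg_pos upper_Gamma_nonneg)
qed

lemma exponential_density_mult_exceed_tail_affine:
  assumes P0: "P0 > 0" and Pbar: "Pbar > 0" and \<epsilon>s: "\<epsilon>s > 0" and \<epsilon>0: "\<epsilon>0 \<ge> 0"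
    and a_def: "a = \<epsilon>s * P0 / Pbar" and \<tau>n_def: "\<tau>n = (real n * \<tau> * Pbar / \<epsilon>s - 1) / P0"
    and \<tau>b_def: "\<tau>b = max \<tau>n (\<epsilon>0 / P0)"
    and x: "x \<noteq> \<epsilon>0 / P0" "x \<noteq> \<tau>b"
  shows "ennreal (exponential_density 1 x)
      * ennreal (if \<epsilon>0 / P0 < x then exceed_tail \<tau> n (\<epsilon>s * (1 + x * P0) / Pbar) else 0)
    = ennreal (exp (- (real n * \<tau>))) * (ennreal (exp (- x)) * indicator {\<epsilon>0 / P0..\<tau>b} x
        + (\<Sum>l<n. ennreal (a ^ l / fact l)
            * (ennreal (exp (- x) * exp (- (a * (x - \<tau>n))) * (x - \<tau>n) ^ l) * indicator {\<tau>b..} x)))"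
proof -
  have a: "a > 0"
    using P0 Pbar \<epsilon>s by (simp add: a_def)
  have affine: "\<epsilon>s * (1 + x * P0) / Pbar - real n * \<tau> = a * (x - \<tau>n)"
    using \<epsilon>s P0 Pbar by (simp add: a_def \<tau>n_def field_simps)
  have bounds: "0 \<le> \<epsilon>0 / P0" "\<epsilon>0 / P0 \<le> \<tau>b" "\<tau>n \<le> \<tau>b"
    using P0 \<epsilon>0 by (auto simp: \<tau>b_def)
  consider "x < \<epsilon>0 / P0" | "\<epsilon>0 / P0 < x" "x < \<tau>b" | "\<tau>b < x"
    using x by linarith
  then show ?thesis
  proof cases
    case 1
    then show ?thesis
      using bounds by (auto simp: indicator_def)
  next
    case 2
    then have "x < \<tau>n" "x \<ge> 0"
      using bounds by (auto simp: \<tau>b_def)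
    then have "\<epsilon>s * (1 + x * P0) / Pbar - real n * \<tau> < 0"
      using a by (simp add: affine mult_pos_neg)
    with 2 \<open>x \<ge> 0\<close> show ?thesis
      by (simp add: exceed_tail_def erlang_tail_def exponential_density_def indicator_def flip: ennreal_mult')
  next
    case 3
    define g where "g l = exp (- x) * exp (- (a * (x - \<tau>n))) * (x - \<tau>n) ^ l" for l
    have x: "x \<ge> \<tau>n" "x \<ge> 0" "\<epsilon>0 / P0 < x"
      using 3 bounds by auto
    then have "a * (x - \<tau>n) \<ge> 0"
      using a by simp
    then have "exponential_density 1 x * exceed_tail \<tau> n (\<epsilon>s * (1 + x * P0) / Pbar)
        = exp (- x) * (exp (- (real n * \<tau>)) * (exp (- (a * (x - \<tau>n))) * exp_partial_sum n (a * (x - \<tau>n))))"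
      using x by (simp add: exceed_tail_def affine erlang_tail_def exponential_density_def)
    also have "\<dots> = exp (- (real n * \<tau>)) * (\<Sum>l<n. a ^ l / fact l * g l)"
      by (simp add: exp_partial_sum_def g_def sum_distrib_left power_mult_distrib mult_ac)
    finally have "exponential_density 1 x * exceed_tail \<tau> n (\<epsilon>s * (1 + x * P0) / Pbar)
        = exp (- (real n * \<tau>)) * (\<Sum>l<n. a ^ l / fact l * g l)" .
    moreover have "(\<Sum>l<n. ennreal (a ^ l / fact l) * ennreal (g l)) = ennreal (\<Sum>l<n. a ^ l / fact l * g l)"
      using a x by (intro sum_ennreal_mult) (auto simp: g_def)
    ultimately show ?thesis
      using 3 x by (simp add: indicator_def exponential_density_nonneg g_def flip: ennreal_mult')
  qed
qed

lemma nn_integral_exponential_density_exceed_tail_affine: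
  assumes n: "n \<ge> 1" and P0: "P0 > 0" and Pbar: "Pbar > 0" and \<epsilon>s: "\<epsilon>s > 0" and \<epsilon>0: "\<epsilon>0 \<ge> 0"
  shows "(\<integral>\<^sup>+x. ennreal (exponential_density 1 x)
      * ennreal (if \<epsilon>0 / P0 < x then exceed_tail \<tau> n (\<epsilon>s * (1 + x * P0) / Pbar) else 0) \<partial>lborel)
    = ennreal (exp (- (real n * \<tau>)) * success_prob_given_admitted \<tau> P0 Pbar \<epsilon>0 \<epsilon>s n)"
proof -
  define a where "a = \<epsilon>s * P0 / Pbar"
  define \<tau>n where "\<tau>n = (real n * \<tau> * Pbar / \<epsilon>s - 1) / P0"
  define \<tau>b where "\<tau>b = max \<tau>n (\<epsilon>0 / P0)"
  define g where "g l x = exp (- x) * exp (- (a * (x - \<tau>n))) * (x - \<tau>n) ^ l" for l x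
  define G where "G l = exp (- \<tau>n) * upper_Gamma (real l + 1) ((\<tau>b - \<tau>n) * (1 + a)) / (1 + a) ^ (l + 1)" for l
  have a: "a > 0"
    using P0 Pbar \<epsilon>s by (simp add: a_def)
  have bounds: "\<epsilon>0 / P0 \<le> \<tau>b" "\<tau>n \<le> \<tau>b"
    by (auto simp: \<tau>b_def)
  have "(\<integral>\<^sup>+x. ennreal (exponential_density 1 x)
      * ennreal (if \<epsilon>0 / P0 < x then exceed_tail \<tau> n (\<epsilon>s * (1 + x * P0) / Pbar) else 0) \<partial>lborel)
    = (\<integral>\<^sup>+x. ennreal (exp (- (real n * \<tau>))) * (ennreal (exp (- x)) * indicator {\<epsilon>0 / P0..\<tau>b} x
        + (\<Sum>l<n. ennreal (a ^ l / fact l) * (ennreal (g l x) * indicator {\<tau>b..} x))) \<partial>lborel)"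
    using AE_lborel_singleton[of "\<epsilon>0 / P0"] AE_lborel_singleton[of \<tau>b]
    by (intro nn_integral_cong_AE, eventually_elim)
       (simp add: exponential_density_mult_exceed_tail_affine[OF P0 Pbar \<epsilon>s \<epsilon>0 a_def \<tau>n_def \<tau>b_def] g_def)
  also have "\<dots> = ennreal (exp (- (real n * \<tau>))) * ((\<integral>\<^sup>+x. ennreal (exp (- x)) * indicator {\<epsilon>0 / P0..\<tau>b} x \<partial>lborel)
        + (\<Sum>l<n. ennreal (a ^ l / fact l) * (\<integral>\<^sup>+x. ennreal (g l x) * indicator {\<tau>b..} x \<partial>lborel)))"
    by (simp add: g_def nn_integral_cmult nn_integral_add nn_integral_sum)
  also have "(\<integral>\<^sup>+x. ennreal (exp (- x)) * indicator {\<epsilon>0 / P0..\<tau>b} x \<partial>lborel)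
      = ennreal (exp (- (\<epsilon>0 / P0)) - exp (- \<tau>b))"
    using bounds by (subst nn_integral_FTC_Icc[where F="\<lambda>x. - exp (- x)"]) (auto intro!: derivative_eq_intros)
  also have "(\<lambda>l. \<integral>\<^sup>+x. ennreal (g l x) * indicator {\<tau>b..} x \<partial>lborel) = (\<lambda>l. ennreal (G l))"
    unfolding g_def G_def using a bounds by (intro ext nn_integral_exp_shifted_power_atLeast) auto
  also have "(\<Sum>l<n. ennreal (a ^ l / fact l) * ennreal (G l)) = ennreal (\<Sum>l<n. a ^ l / fact l * G l)"
    using a by (intro sum_ennreal_mult) (auto simp: G_def upper_Gamma_nonneg)
  also have "ennreal (exp (- (\<epsilon>0 / P0)) - exp (- \<tau>b)) + ennreal (\<Sum>l<n. a ^ l / fact l * G l)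
      = ennreal (success_prob_given_admitted \<tau> P0 Pbar \<epsilon>0 \<epsilon>s n)"
    using a bounds
    by (simp add: success_prob_given_admitted_eq_sum[OF n P0 Pbar \<epsilon>s a_def \<tau>n_def \<tau>b_def] G_def
        upper_Gamma_nonneg sum_nonneg flip: ennreal_plus)
  finally show ?thesis
    by (simp add: ennreal_mult')
qed

section \<open>Order statistics and rate conditions\<close>

lemma drop_sorted_eq_filter_greater:
  fixes ys :: "'a :: linorder list"
  assumes "sorted ys"
  shows "drop (length ys - length (filter (\<lambda>x. \<tau> < x) ys)) ys = filter (\<lambda>x. \<tau> < x) ys"
  using assms
proof (induction ys)
  case (Cons y ys)
  show ?case
  proof (cases "\<tau> < y")
    case True
    with Cons.prems have "\<forall>x\<in>set ys. \<tau> < x"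
      by auto
    with True show ?thesis
      by simp
  next
    case False
    then have "length (y # ys) - length (filter (\<lambda>x. \<tau> < x) (y # ys))
        = Suc (length ys - length (filter (\<lambda>x. \<tau> < x) ys))"
      using length_filter_le[of "\<lambda>x. \<tau> < x" ys] by (simp add: Suc_diff_le)
    with False Cons show ?thesis
      by simp
  qed
qed simp

lemma sum_nth_eq_sum_list_drop:
  assumes "a \<le> length ys"
  shows "(\<Sum>j = a + 1..length ys. ys ! (j - 1)) = sum_list (drop a ys)"
proof -
  have "sum_list (drop a ys) = (\<Sum>i<length ys - a. ys ! (a + i))"
    using assms by (simp add: sum_list_sum_nth atLeast0LessThan)
  also have "\<dots> = (\<Sum>j = a + 1..length ys. ys ! (j - 1))"
    by (rule sum.reindex_bij_witness[where i="\<lambda>j. j - 1 - a" and j="\<lambda>i. i + a + 1"])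
      (use assms in \<open>auto simp: add.commute\<close>)
  finally show ?thesis
    by simp
qed

lemma sum_top_ostat:
  "(\<Sum>j = K - card {m \<in> {1..K}. \<tau> < h m \<omega>} + 1..K. ostat h K j \<omega>) = (\<Sum>m \<in> {m \<in> {1..K}. \<tau> < h m \<omega>}. h m \<omega>)"
proof -
  define xs where "xs = map (\<lambda>m. h m \<omega>) [1..<K+1]"
  have length_xs: "length (sort xs) = K"
    by (simp add: xs_def)
  define A where "A = {m \<in> {1..K}. \<tau> < h m \<omega>}"
  let ?above = "filter (\<lambda>x. \<tau> < x)"
  have A: "A = set (filter (\<lambda>m. \<tau> < h m \<omega>) [1..<K+1])"
    by (auto simp: A_def)
  have above_xs: "?above xs = map (\<lambda>m. h m \<omega>) (filter (\<lambda>m. \<tau> < h m \<omega>) [1..<K+1])"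
    by (simp add: xs_def filter_map comp_def)
  have mset_above: "mset (?above (sort xs)) = mset (?above xs)"
    by simp
  have "length (?above (sort xs)) = length (?above xs)"
    using mset_above by (metis size_mset)
  also have "\<dots> = card A"
    unfolding above_xs A length_map by (rule distinct_card[symmetric]) simp
  finally have "(\<Sum>j = K - card A + 1..K. sort xs ! (j - 1)) = sum_list (?above (sort xs))"
    using sum_nth_eq_sum_list_drop[of "K - card A" "sort xs"] drop_sorted_eq_filter_greater[of "sort xs" \<tau>]
      length_xs
    by simp
  also have "\<dots> = sum_list (?above xs)"
    using mset_above by (metis sum_mset_sum_list)
  also have "\<dots> = (\<Sum>m\<in>A. h m \<omega>)"
    by (simp add: above_xs A sum_list_distinct_conv_sum_set)
  finally show ?thesis
    by (simp add: ostat_def xs_def A_def)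
qed

lemma admitted_set_eq_iff:
  fixes h :: "nat \<Rightarrow> 'a \<Rightarrow> real"
  assumes "T \<subseteq> {1..K}"
  shows "{m \<in> {1..K}. \<tau> < h m \<omega>} = T \<longleftrightarrow> (\<forall>m\<in>{1..K} - T. h m \<omega> \<le> \<tau>) \<and> (\<forall>m\<in>T. \<tau> < h m \<omega>)"
  using assms by (auto simp: not_less) (meson DiffI atLeastAtMost_iff not_le)

lemma less_log2_one_plus_iff: "-1 < y \<Longrightarrow> R < log 2 (1 + y) \<longleftrightarrow> 2 powr R - 1 < y"
  by (subst less_log_iff) auto

lemma less_log2_one_plus_mult_iff:
  assumes "x \<ge> 0" and "P > 0"
  shows "R < log 2 (1 + x * P) \<longleftrightarrow> (2 powr R - 1) / P < x"
proof -
  have "-1 < x * P"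
    using assms by (smt (verit) mult_nonneg_nonneg)
  then show ?thesis
    using assms by (simp add: less_log2_one_plus_iff pos_divide_less_eq)
qed

lemma less_log2_one_plus_div_iff:
  assumes "x \<ge> 0" and "P0 > 0" and "Pbar > 0" and "S \<ge> 0"
  shows "r < log 2 (1 + Pbar * S / (1 + x * P0)) \<longleftrightarrow> (2 powr r - 1) * (1 + x * P0) / Pbar < S"
proof -
  have "1 + x * P0 > 0"
    using assms by (simp add: add_pos_nonneg)
  moreover from this have "-1 < Pbar * S / (1 + x * P0)"
    using assms by (smt (verit) divide_nonneg_pos mult_nonneg_nonneg)
  ultimately show ?thesis
    using assms by (simp only: less_log2_one_plus_iff) (simp add: field_simps)
qed

section \<open>Exponentially distributed channel gains\<close>

locale exponential_gains = prob_space +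
  fixes h :: "nat \<Rightarrow> 'a \<Rightarrow> real" and K :: nat
  assumes indep_gains: "indep_vars (\<lambda>_. borel) h {0..K}"
    and exponential_gain: "\<And>m. m \<le> K \<Longrightarrow> distributed M lborel (h m) (exponential_density 1)"
begin

lemma borel_measurable_gain [measurable]: "m \<le> K \<Longrightarrow> h m \<in> borel_measurable M"
  using distributed_measurable[OF exponential_gain] by simp

lemma prob_all_gains_le:
  assumes "\<tau> \<ge> 0" and "C \<subseteq> {0..K}"
  shows "prob {\<omega> \<in> space M. \<forall>m\<in>C. h m \<omega> \<le> \<tau>} = (1 - exp (- \<tau>)) ^ card C"
proof (cases "C = {}")
  case True
  then show ?thesis by (simp add: prob_space)
next
  case False
  have "finite C"
    using assms(2) finite_subset by blast
  have "{\<omega> \<in> space M. \<forall>m\<in>C. h m \<omega> \<le> \<tau>} = (\<Inter>m\<in>C. h m -` {..\<tau>} \<inter> space M)"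
    using False by auto
  also have "prob \<dots> = (\<Prod>m\<in>C. prob (h m -` {..\<tau>} \<inter> space M))"
    using False \<open>finite C\<close> assms(2) by (intro indep_varsD[OF indep_gains]) auto
  also have "\<dots> = (\<Prod>m\<in>C. 1 - exp (- \<tau>))"
  proof (intro prod.cong refl)
    fix m assume "m \<in> C"
    then have "\<P>(\<omega> in M. h m \<omega> \<le> \<tau>) = 1 - exp (- \<tau>)"
      using exponential_distributedD_le[OF exponential_gain] assms by auto
    then show "prob (h m -` {..\<tau>} \<inter> space M) = 1 - exp (- \<tau>)"
      by (simp add: vimage_def Int_def conj_commute)
  qed
  finally show ?thesis by simp
qed

lemma prob_gains_exceed:
  assumes "\<tau> \<ge> 0" and "T \<subseteq> {0..K}"
  shows "prob {\<omega> \<in> space M. (\<forall>m\<in>T. \<tau> < h m \<omega>) \<and> s < (\<Sum>m\<in>T. h m \<omega>)} = exceed_tail \<tau> (card T) s"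
proof -
  have "finite T"
    using assms(2) finite_subset by blast
  then show ?thesis
    using assms(2)
  proof (induction T arbitrary: s rule: finite_induct)
    case empty
    show ?case
      by (simp add: exceed_tail_def erlang_tail_def exp_partial_sum_def prob_space)
  next
    case (insert k T)
    define P where "P x y \<longleftrightarrow> \<tau> < x \<and> (\<forall>m\<in>T. \<tau> < y m) \<and> s < x + (\<Sum>m\<in>T. y m)" for x and y :: "nat \<Rightarrow> real"
    have "emeasure M {\<omega> \<in> space M. (\<forall>m\<in>insert k T. \<tau> < h m \<omega>) \<and> s < (\<Sum>m\<in>insert k T. h m \<omega>)}
        = emeasure M {\<omega> \<in> space M. P (h k \<omega>) (\<lambda>i\<in>T. h i \<omega>)}"
      using insert.hyps by (intro arg_cong[where f="emeasure M"]) (auto simp: P_def)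
    also have "\<dots> = (\<integral>\<^sup>+x. ennreal (exponential_density 1 x) * emeasure M {\<omega> \<in> space M. P x (\<lambda>i\<in>T. h i \<omega>)} \<partial>lborel)"
      using insert insert.hyps(1) unfolding P_def
      by (intro emeasure_indep_component[OF indep_gains] exponential_gain) auto
    also have "\<dots> = (\<integral>\<^sup>+x. ennreal (exponential_density 1 x)
        * ennreal (if \<tau> < x then exceed_tail \<tau> (card T) (s - x) else 0) \<partial>lborel)"
    proof (intro nn_integral_cong arg_cong2[where f="(*)"] refl)
      fix x :: real
      have "{\<omega> \<in> space M. P x (\<lambda>i\<in>T. h i \<omega>)}
          = (if \<tau> < x then {\<omega> \<in> space M. (\<forall>m\<in>T. \<tau> < h m \<omega>) \<and> s - x < (\<Sum>m\<in>T. h m \<omega>)} else {})"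
        by (auto simp: P_def algebra_simps)
      then show "emeasure M {\<omega> \<in> space M. P x (\<lambda>i\<in>T. h i \<omega>)}
          = ennreal (if \<tau> < x then exceed_tail \<tau> (card T) (s - x) else 0)"
        using insert.IH[of "s - x"] insert.prems by (simp add: emeasure_eq_measure)
    qed
    also have "\<dots> = ennreal (exceed_tail \<tau> (card (insert k T)) s)"
      using insert.hyps assms(1) by (simp add: nn_integral_exponential_density_exceed_tail)
    finally show ?case
      by (simp add: emeasure_eq_measure exceed_tail_nonneg)
  qed
qed

lemma AE_gain_nonneg: "m \<le> K \<Longrightarrow> AE \<omega> in M. 0 \<le> h m \<omega>"
  using distributed_AE2[OF exponential_gain, of m "\<lambda>x. 0 \<le> x"] by (simp add: exponential_density_def)

lemma prob_less_log2_gain0: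
  assumes "P0 > 0" and "R0 > 0"
  shows "prob {\<omega> \<in> space M. R0 < log 2 (1 + h 0 \<omega> * P0)} = exp (- ((2 powr R0 - 1) / P0))"
proof -
  \<comment> \<open>only almost surely, since \<open>h 0\<close> may be negative on a null set, where \<open>log\<close> is junk\<close>
  have "prob {\<omega> \<in> space M. R0 < log 2 (1 + h 0 \<omega> * P0)} = prob {\<omega> \<in> space M. (2 powr R0 - 1) / P0 < h 0 \<omega>}"
  proof (rule measure_eq_AE)
    show "AE \<omega> in M. \<omega> \<in> {\<omega> \<in> space M. R0 < log 2 (1 + h 0 \<omega> * P0)}
        \<longleftrightarrow> \<omega> \<in> {\<omega> \<in> space M. (2 powr R0 - 1) / P0 < h 0 \<omega>}"
      using AE_gain_nonneg[of 0, simplified]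
      by eventually_elim (use assms in \<open>auto simp: less_log2_one_plus_mult_iff\<close>)
  qed auto
  also have "\<dots> = exp (- ((2 powr R0 - 1) / P0))"
    using exponential_distributedD_gt[OF exponential_gain, of 0 "(2 powr R0 - 1) / P0"] assms
    by (simp add: ge_one_powr_ge_zero)
  finally show ?thesis .
qed

lemma prob_success_given_gain0:
  assumes \<tau>: "\<tau> \<ge> 0" and x: "x \<ge> 0" and P0: "P0 > 0" and Pbar: "Pbar > 0" and T: "T \<subseteq> {1..K}"
  shows "prob {\<omega> \<in> space M. R0 < log 2 (1 + x * P0)
      \<and> real (card T) * Ri < log 2 (1 + Pbar * (\<Sum>m\<in>T. h m \<omega>) / (1 + x * P0)) \<and> (\<forall>m\<in>T. \<tau> < h m \<omega>)}
    = (if (2 powr R0 - 1) / P0 < x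
       then exceed_tail \<tau> (card T) ((2 powr (real (card T) * Ri) - 1) * (1 + x * P0) / Pbar) else 0)"
proof -
  have "0 \<le> (\<Sum>m\<in>T. h m \<omega>)" if "\<forall>m\<in>T. \<tau> < h m \<omega>" for \<omega>
    using that \<tau> by (intro sum_nonneg) force
  then have "{\<omega> \<in> space M. R0 < log 2 (1 + x * P0)
      \<and> real (card T) * Ri < log 2 (1 + Pbar * (\<Sum>m\<in>T. h m \<omega>) / (1 + x * P0)) \<and> (\<forall>m\<in>T. \<tau> < h m \<omega>)}
    = (if (2 powr R0 - 1) / P0 < x then {\<omega> \<in> space M. (\<forall>m\<in>T. \<tau> < h m \<omega>)
        \<and> (2 powr (real (card T) * Ri) - 1) * (1 + x * P0) / Pbar < (\<Sum>m\<in>T. h m \<omega>)} else {})"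
    using x P0 Pbar by (auto simp: less_log2_one_plus_mult_iff less_log2_one_plus_div_iff)
  moreover have "T \<subseteq> {0..K}"
    using T by auto
  ultimately show ?thesis
    using prob_gains_exceed[OF \<tau>] by simp
qed

lemma prob_success_all_exceed:
  assumes \<tau>: "\<tau> \<ge> 0" and P0: "P0 > 0" and Pbar: "Pbar > 0" and R0: "R0 > 0" and Ri: "Ri > 0"
    and T: "T \<subseteq> {1..K}" "T \<noteq> {}"
  shows "prob {\<omega> \<in> space M. R0 < log 2 (1 + h 0 \<omega> * P0)
      \<and> real (card T) * Ri < log 2 (1 + Pbar * (\<Sum>m\<in>T. h m \<omega>) / (1 + h 0 \<omega> * P0))
      \<and> (\<forall>m\<in>T. \<tau> < h m \<omega>)}
    = exp (- (real (card T) * \<tau>))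
      * success_prob_given_admitted \<tau> P0 Pbar (2 powr R0 - 1) (2 powr (real (card T) * Ri) - 1) (card T)"
proof -
  define n where "n = card T"
  define \<epsilon>0 where "\<epsilon>0 = 2 powr R0 - 1"
  define \<epsilon>s where "\<epsilon>s = 2 powr (real n * Ri) - 1"
  define P where "P x y \<longleftrightarrow> R0 < log 2 (1 + x * P0)
      \<and> real n * Ri < log 2 (1 + Pbar * (\<Sum>m\<in>T. y m) / (1 + x * P0)) \<and> (\<forall>m\<in>T. \<tau> < y m)"
    for x and y :: "nat \<Rightarrow> real"
  have "finite T" "n \<ge> 1"
    using T finite_subset by (auto simp: n_def Suc_le_eq card_gt_0_iff)
  then have "\<epsilon>s > 0" "\<epsilon>0 > 0"
    using Ri R0 by (simp_all add: \<epsilon>s_def \<epsilon>0_def)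
  have "emeasure M {\<omega> \<in> space M. P (h 0 \<omega>) (\<lambda>i\<in>T. h i \<omega>)}
      = (\<integral>\<^sup>+x. ennreal (exponential_density 1 x) * emeasure M {\<omega> \<in> space M. P x (\<lambda>i\<in>T. h i \<omega>)} \<partial>lborel)"
    using T \<open>finite T\<close> unfolding P_def by (intro emeasure_indep_component[OF indep_gains] exponential_gain) auto
  also have "\<dots> = (\<integral>\<^sup>+x. ennreal (exponential_density 1 x)
      * ennreal (if \<epsilon>0 / P0 < x then exceed_tail \<tau> n (\<epsilon>s * (1 + x * P0) / Pbar) else 0) \<partial>lborel)"
  proof (intro nn_integral_cong)
    fix x :: real
    show "ennreal (exponential_density 1 x) * emeasure M {\<omega> \<in> space M. P x (\<lambda>i\<in>T. h i \<omega>)}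
        = ennreal (exponential_density 1 x)
          * ennreal (if \<epsilon>0 / P0 < x then exceed_tail \<tau> n (\<epsilon>s * (1 + x * P0) / Pbar) else 0)"
      using prob_success_given_gain0[OF \<tau> _ P0 Pbar T(1), of x R0 Ri]
      by (cases "x \<ge> 0") (simp_all add: emeasure_eq_measure P_def n_def \<epsilon>0_def \<epsilon>s_def exponential_density_def)
  qed
  also have "\<dots> = ennreal (exp (- (real n * \<tau>)) * success_prob_given_admitted \<tau> P0 Pbar \<epsilon>0 \<epsilon>s n)"
    using \<open>n \<ge> 1\<close> P0 Pbar \<open>\<epsilon>s > 0\<close> \<open>\<epsilon>0 > 0\<close> by (simp add: nn_integral_exponential_density_exceed_tail_affine)
  finally have "emeasure M {\<omega> \<in> space M. P (h 0 \<omega>) (\<lambda>i\<in>T. h i \<omega>)}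
      = ennreal (exp (- (real n * \<tau>)) * success_prob_given_admitted \<tau> P0 Pbar \<epsilon>0 \<epsilon>s n)" .
  moreover have "success_prob_given_admitted \<tau> P0 Pbar \<epsilon>0 \<epsilon>s n \<ge> 0"
    using \<open>n \<ge> 1\<close> P0 Pbar \<open>\<epsilon>s > 0\<close> \<open>\<epsilon>0 > 0\<close> by (intro success_prob_given_admitted_nonneg) auto
  ultimately show ?thesis
    by (simp add: emeasure_eq_measure P_def n_def \<epsilon>0_def \<epsilon>s_def)
qed

lemma prob_admitted_set_success:
  assumes \<tau>: "\<tau> \<ge> 0" and P0: "P0 > 0" and Pbar: "Pbar > 0" and R0: "R0 > 0" and Ri: "Ri > 0"
    and T: "T \<subseteq> {1..K}" "T \<noteq> {}"
  shows "prob {\<omega> \<in> space M. {m \<in> {1..K}. \<tau> < h m \<omega>} = T \<and> R0 < log 2 (1 + h 0 \<omega> * P0)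
      \<and> real (card T) * Ri < log 2 (1 + Pbar * (\<Sum>m\<in>T. h m \<omega>) / (1 + h 0 \<omega> * P0))}
    = (1 - exp (- \<tau>)) ^ (K - card T) * (exp (- (real (card T) * \<tau>))
      * success_prob_given_admitted \<tau> P0 Pbar (2 powr R0 - 1) (2 powr (real (card T) * Ri) - 1) (card T))"
proof -
  define C where "C = {1..K} - T"
  define Q where "Q y \<longleftrightarrow> R0 < log 2 (1 + y 0 * P0)
      \<and> real (card T) * Ri < log 2 (1 + Pbar * (\<Sum>m\<in>T. y m) / (1 + y 0 * P0)) \<and> (\<forall>m\<in>T. \<tau> < y m)"
    for y :: "nat \<Rightarrow> real"
  have "finite T"
    using T(1) finite_subset by blast
  have "{\<omega> \<in> space M. {m \<in> {1..K}. \<tau> < h m \<omega>} = T \<and> R0 < log 2 (1 + h 0 \<omega> * P0)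
      \<and> real (card T) * Ri < log 2 (1 + Pbar * (\<Sum>m\<in>T. h m \<omega>) / (1 + h 0 \<omega> * P0))}
    = {\<omega> \<in> space M. (\<forall>m\<in>C. (\<lambda>i\<in>C. h i \<omega>) m \<le> \<tau>) \<and> Q (\<lambda>i\<in>insert 0 T. h i \<omega>)}"
    unfolding admitted_set_eq_iff[OF T(1)] by (auto simp: C_def Q_def)
  also have "prob \<dots> = prob {\<omega> \<in> space M. \<forall>m\<in>C. (\<lambda>i\<in>C. h i \<omega>) m \<le> \<tau>}
      * prob {\<omega> \<in> space M. Q (\<lambda>i\<in>insert 0 T. h i \<omega>)}"
    using T \<open>finite T\<close> unfolding Q_def
    by (intro prob_indep_restrict_conj[OF indep_gains]) (auto simp: C_def)
  also have "prob {\<omega> \<in> space M. \<forall>m\<in>C. (\<lambda>i\<in>C. h i \<omega>) m \<le> \<tau>} = (1 - exp (- \<tau>)) ^ (K - card T)"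
    using prob_all_gains_le[OF \<tau>, of C] T \<open>finite T\<close> by (force simp: C_def card_Diff_subset)
  also have "prob {\<omega> \<in> space M. Q (\<lambda>i\<in>insert 0 T. h i \<omega>)} = exp (- (real (card T) * \<tau>))
      * success_prob_given_admitted \<tau> P0 Pbar (2 powr R0 - 1) (2 powr (real (card T) * Ri) - 1) (card T)"
    using prob_success_all_exceed[OF assms] by (simp add: Q_def cong: conj_cong)
  finally show ?thesis .
qed

lemma prob_success_Nadm_eq:
  assumes \<tau>: "\<tau> \<ge> 0" and P0: "P0 > 0" and Pbar: "Pbar > 0" and R0: "R0 > 0" and Ri: "Ri > 0"
    and n: "1 \<le> n" "n \<le> K"
  shows "prob {\<omega> \<in> space M. log 2 (1 + h 0 \<omega> * P0) > R0 \<and>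
      log 2 (1 + Pbar * (\<Sum>j = K - n + 1..K. ostat h K j \<omega>) / (1 + h 0 \<omega> * P0)) > real n * Ri \<and>
      Nadm h K \<tau> \<omega> = n}
    = real (K choose n) * exp (- real n * \<tau>) * (1 - exp (- \<tau>)) ^ (K - n)
      * success_prob_given_admitted \<tau> P0 Pbar (2 powr R0 - 1) (2 powr (real n * Ri) - 1) n"
proof -
  define admitted where "admitted \<omega> = {m \<in> {1..K}. \<tau> < h m \<omega>}" for \<omega>
  define TT where "TT = {T. T \<subseteq> {1..K} \<and> card T = n}"
  define success where "success T \<omega> \<longleftrightarrow> R0 < log 2 (1 + h 0 \<omega> * P0)
      \<and> real (card T) * Ri < log 2 (1 + Pbar * (\<Sum>m\<in>T. h m \<omega>) / (1 + h 0 \<omega> * P0))" for T \<omega>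
  have "{\<omega> \<in> space M. log 2 (1 + h 0 \<omega> * P0) > R0 \<and>
      log 2 (1 + Pbar * (\<Sum>j = K - n + 1..K. ostat h K j \<omega>) / (1 + h 0 \<omega> * P0)) > real n * Ri \<and>
      Nadm h K \<tau> \<omega> = n} = {\<omega> \<in> space M. admitted \<omega> \<in> TT \<and> success (admitted \<omega>) \<omega>}"
    using sum_top_ostat[where h=h and K=K and \<tau>=\<tau>] by (auto simp: TT_def success_def admitted_def Nadm_def)
  also have "prob \<dots> = (\<Sum>T\<in>TT. prob {\<omega> \<in> space M. admitted \<omega> = T \<and> success T \<omega>})"
  proof (rule measure_eq_sum_fibres[where g=admitted and Q=success])
    show "finite TT"
      by (rule finite_subset[of _ "Pow {1..K}"]) (auto simp: TT_def)
    fix T assume "T \<in> TT"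
    then have T: "T \<subseteq> {1..K}"
      by (simp add: TT_def)
    then have [measurable]: "m \<in> T \<Longrightarrow> h m \<in> borel_measurable M" for m
      by auto
    show "{\<omega> \<in> space M. admitted \<omega> = T \<and> success T \<omega>} \<in> sets M"
      unfolding admitted_def success_def admitted_set_eq_iff[OF T] by measurable
  qed
  also have "\<dots> = (\<Sum>T\<in>TT. (1 - exp (- \<tau>)) ^ (K - n) * (exp (- (real n * \<tau>))
      * success_prob_given_admitted \<tau> P0 Pbar (2 powr R0 - 1) (2 powr (real n * Ri) - 1) n))"
  proof (intro sum.cong refl)
    fix T assume "T \<in> TT"
    then have T: "T \<subseteq> {1..K}" "T \<noteq> {}" and card_T: "card T = n"
      using n by (auto simp: TT_def)
    show "prob {\<omega> \<in> space M. admitted \<omega> = T \<and> success T \<omega>} = (1 - exp (- \<tau>)) ^ (K - n)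
        * (exp (- (real n * \<tau>)) * success_prob_given_admitted \<tau> P0 Pbar (2 powr R0 - 1) (2 powr (real n * Ri) - 1) n)"
      using prob_admitted_set_success[OF assms(1-5) T] by (simp add: admitted_def success_def card_T)
  qed
  also have "\<dots> = real (K choose n) * exp (- real n * \<tau>) * (1 - exp (- \<tau>)) ^ (K - n)
      * success_prob_given_admitted \<tau> P0 Pbar (2 powr R0 - 1) (2 powr (real n * Ri) - 1) n"
    by (simp add: TT_def n_subsets)
  finally show ?thesis .
qed

lemma measure_Nadm_mult_Q3:
  assumes "\<tau> \<ge> 0" and "P0 > 0" and "Pbar > 0" and "R0 > 0" and "Ri > 0" and "1 \<le> n" "n \<le> K"
  shows "measure M {\<omega> \<in> space M. Nadm h K \<tau> \<omega> = n} * Q3 M h K \<tau> P0 Pbar R0 Ri n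
    = real (K choose n) * exp (- real n * \<tau>) * (1 - exp (- \<tau>)) ^ (K - n)
      * success_prob_given_admitted \<tau> P0 Pbar (2 powr R0 - 1) (2 powr (real n * Ri) - 1) n"
proof -
  have "measure M {\<omega> \<in> space M. Nadm h K \<tau> \<omega> = n} * Q3 M h K \<tau> P0 Pbar R0 Ri n
      = prob {\<omega> \<in> space M. log 2 (1 + h 0 \<omega> * P0) > R0 \<and>
          log 2 (1 + Pbar * (\<Sum>j = K - n + 1..K. ostat h K j \<omega>) / (1 + h 0 \<omega> * P0)) > real n * Ri \<and>
          Nadm h K \<tau> \<omega> = n}"
    unfolding Q3_def by (rule measure_mult_divide_measure_subset) (auto simp: Nadm_def)
  then show ?thesis
    using prob_success_Nadm_eq[OF assms] by simp
qed

lemma prob_Nadm_eq_0: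
  assumes "\<tau> \<ge> 0"
  shows "prob {\<omega> \<in> space M. Nadm h K \<tau> \<omega> = 0} = (1 - exp (- \<tau>)) ^ K"
proof -
  have "{\<omega> \<in> space M. Nadm h K \<tau> \<omega> = 0} = {\<omega> \<in> space M. \<forall>m\<in>{1..K}. h m \<omega> \<le> \<tau>}"
    by (auto simp: Nadm_def not_less)
  then show ?thesis
    using prob_all_gains_le[OF assms, of "{1..K}"] by auto
qed

end

theorem theorem2:
  fixes Mp :: "'a measure" and h :: "nat \<Rightarrow> 'a \<Rightarrow> real"
    and M :: nat and \<tau> P0 Pbar R0 Ri :: real
  assumes "prob_space Mp"
    and "M \<ge> 1"
    and "\<tau> > 0" "P0 > 0" "Pbar > 0" "R0 > 0" "Ri > 0"
    and "prob_space.indep_vars Mp (\<lambda>_. borel) h {0..M}"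
    and "\<And>m. m \<le> M \<Longrightarrow> distributed Mp lborel (h m) (exponential_density 1)"
  shows "P0_IIOL Mp h M \<tau> P0 Pbar R0 Ri =
    (let \<epsilon>0 = 2 powr R0 - 1 in
     1 - (\<Sum>n = 1..M.
       (let \<epsilon>s = 2 powr (real n * Ri) - 1;
            \<tau>n = (real n * \<tau> * Pbar / \<epsilon>s - 1) / P0;
            \<tau>bn = max \<tau>n (\<epsilon>0 / P0);
            c = 1 + \<epsilon>s * P0 / Pbar
        in real (M choose n) * exp (- real n * \<tau>) * (1 - exp (- \<tau>)) ^ (M - n) *
           ((\<Sum>l = 1..n - 1. \<epsilon>s ^ l * Pbar powr (- real l) * P0 ^ l / fact l * exp (- \<tau>n)
                * upper_Gamma (real l + 1) ((\<tau>bn - \<tau>n) * c) / c ^ (l + 1))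
            + exp (- \<epsilon>0 / P0) - exp (- \<tau>bn)
            + exp (- \<tau>n - (\<tau>bn - \<tau>n) * c) / c)))
       - (1 - exp (- \<tau>)) ^ M * exp (- \<epsilon>0 / P0))"
proof -
  interpret exponential_gains Mp h M
    using assms by (simp add: exponential_gains_def exponential_gains_axioms_def)
  have "(\<Sum>n = 1..M. measure Mp {\<omega> \<in> space Mp. Nadm h M \<tau> \<omega> = n} * Q3 Mp h M \<tau> P0 Pbar R0 Ri n)
      = (\<Sum>n = 1..M. real (M choose n) * exp (- real n * \<tau>) * (1 - exp (- \<tau>)) ^ (M - n)
          * success_prob_given_admitted \<tau> P0 Pbar (2 powr R0 - 1) (2 powr (real n * Ri) - 1) n)"
    using assms by (intro sum.cong refl measure_Nadm_mult_Q3) auto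
  then show ?thesis
    using prob_Nadm_eq_0[of \<tau>] prob_less_log2_gain0[of P0 R0] assms(3-6)
    unfolding P0_IIOL_def success_prob_given_admitted_def Let_def minus_divide_left by simp
qed

end
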